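(* Let $\mathbf{A}=\mathcal{A}_1\parallel\cdots\parallel\mathcal{A}_n$ be a parallel composition of finite labelled transition systems. Every infinite chain $e_1<e_2<e_3<\cdots$ of events of a branching process of $\mathbf{A}$ contains a subchain $e_{i_1}\ll e_{i_2}\ll e_{i_3}\ll\cdots$ (with $i_1<i_2<\cdots$) in which consecutive events are related by the strong causal relation.
   Context: A labelled transition system (LTS) is $\mathcal{A}=(\Sigma,S,T,\lambda,s^0)$ with finite actions $\Sigma$, finite states $S$, $T\subseteq S\times S$, $\lambda:T\to\Sigma$, initial $s^0$. For $\mathcal{A}_j=(\Sigma_j,S_j,T_j,\lambda_j,s^0_j)$, the parallel composition has global states in $S_1\times\cdots\times S_n$, initial state $(s^0_1,\dots,s^0_n)$, and global transitions $\mathbf{t}=(t_1,\dots,t_n)\neq(\star,\dots,\star)$ with label $a$, where $t_j$ is an $a$-transition of $\mathcal{A}_j$ if $a\in\Sigma_j$ and $t_j=\star$ otherwise ($\mathcal{A}_j$ participates iff $t_j\ne\star$); ${}^\bullet\mathbf{t}$ / $\mathbf{t}^\bullet$ are the sets of source / target states of the $t_j\neq\star$. Branching processes of $\mathbf{A}$ are Petri nets with conditions labelled by local states and events labelled by global transitions, defined inductively: the net with conditions $b^0_1,\dots,b^0_n$ labelled $s^0_1,\dots,s^0_n$ and no events is one; if a reachable marking of a branching process contains a set $M$ of conditions labelled exactly by ${}^\bullet\mathbf{t}$ and there is no event labelled $\mathbf{t}$ with input set $M$, adding an event $e$ labelled $\mathbf{t}$ with inputs $M$ and a fresh output condition for each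 state of $\mathbf{t}^\bullet$ (labelled by it) gives a branching process; arbitrary branching processes are (countable) unions of such. For nodes $x,y$, $x<y$ means there is a nonempty directed arc path from $x$ to $y$. For an event $e$, $[e]=\{e':e'\le e\}$ and $M(e)$ is the marking (set of conditions) reached by firing exactly the events of $[e]$ from the initial marking. Event $e'$ is a strong cause of event $e$, written $e'\ll e$, if $e'<e$ and $b'<b$ for every $b\in M(e)\setminus M(e')$ and every $b'\in M(e')\setminus M(e)$. *)

theory Defs
  imports "HOL-Library.Countable_Set"
begin

text \<open>An LTS (Sigma, S, T, lambda, s0). Transitions are pairs of states; the labelling
  is a function on pairs, only relevant on T.\<close>
record ('a, 's) lts =
  sig  :: "'a set"
  st   :: "'s set"
  tr   :: "('s \<times> 's) set"
  lab  :: "'s \<times> 's \<Rightarrow> 'a"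
  init :: "'s"

definition is_lts :: "('a, 's) lts \<Rightarrow> bool" where
  "is_lts L \<longleftrightarrow> finite (sig L) \<and> finite (st L) \<and> tr L \<subseteq> st L \<times> st L
     \<and> lab L ` tr L \<subseteq> sig L \<and> init L \<in> st L"

text \<open>The system A_1 || ... || A_n is given by n and the components A j, j < n.
  A global transition is a tuple (t_0,...,t_{n-1}); None stands for the idle symbol star.\<close>
type_synonym 's gtrans = "nat \<Rightarrow> ('s \<times> 's) option"

definition gtrans_lab :: "(nat \<Rightarrow> ('a, 's) lts) \<Rightarrow> nat \<Rightarrow> 's gtrans \<Rightarrow> 'a \<Rightarrow> bool" where
  "gtrans_lab A n t a \<longleftrightarrow>
     (\<forall>j<n. (a \<in> sig (A j) \<longrightarrow> (\<exists>u. t j = Some u \<and> u \<in> tr (A j) \<and> lab (A j) u = a))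
          \<and> (a \<notin> sig (A j) \<longrightarrow> t j = None))
     \<and> (\<forall>j. n \<le> j \<longrightarrow> t j = None)
     \<and> (\<exists>j<n. t j \<noteq> None)"

definition is_gtrans :: "(nat \<Rightarrow> ('a, 's) lts) \<Rightarrow> nat \<Rightarrow> 's gtrans \<Rightarrow> bool" where
  "is_gtrans A n t \<longleftrightarrow> (\<exists>a. gtrans_lab A n t a)"

text \<open>Local states are tagged by their component index, so that the local state spaces
  of different components are disjoint.\<close>
definition pre_set :: "'s gtrans \<Rightarrow> (nat \<times> 's) set" where
  "pre_set t = {(j, fst u) | j u. t j = Some u}"

definition post_set :: "'s gtrans \<Rightarrow> (nat \<times> 's) set" where
  "post_set t = {(j, snd u) | j u. t j = Some u}"

record ('b, 'e, 's) net =
  conds  :: "'b set"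
  events :: "'e set"
  npre   :: "'e \<Rightarrow> 'b set"
  npost  :: "'e \<Rightarrow> 'b set"
  clab   :: "'b \<Rightarrow> nat \<times> 's"
  elab   :: "'e \<Rightarrow> 's gtrans"

definition agrees :: "('b, 'e, 's) net \<Rightarrow> ('b, 'e, 's) net \<Rightarrow> bool" where
  "agrees N N' \<longleftrightarrow>
     (\<forall>e\<in>events N. npre N' e = npre N e \<and> npost N' e = npost N e \<and> elab N' e = elab N e)
     \<and> (\<forall>b\<in>conds N. clab N' b = clab N b)"

definition subnet :: "('b, 'e, 's) net \<Rightarrow> ('b, 'e, 's) net \<Rightarrow> bool" where
  "subnet N N' \<longleftrightarrow> conds N \<subseteq> conds N' \<and> events N \<subseteq> events N' \<and> agrees N N'"

definition init_mark :: "('b, 'e, 's) net \<Rightarrow> 'b set" where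
  "init_mark N = {b \<in> conds N. \<forall>e\<in>events N. b \<notin> npost N e}"

fun fire_list :: "('b, 'e, 's) net \<Rightarrow> 'b set \<Rightarrow> 'e list \<Rightarrow> 'b set option" where
  "fire_list N K [] = Some K"
| "fire_list N K (e # es) =
     (if e \<in> events N \<and> npre N e \<subseteq> K
      then fire_list N ((K - npre N e) \<union> npost N e) es else None)"

definition reach_marks :: "('b, 'e, 's) net \<Rightarrow> 'b set set" where
  "reach_marks N = {K. \<exists>es. fire_list N (init_mark N) es = Some K}"

inductive fin_bp :: "(nat \<Rightarrow> ('a, 's) lts) \<Rightarrow> nat \<Rightarrow> ('b, 'e, 's) net \<Rightarrow> bool"
  for A n where
  base: "events N = {} \<Longrightarrow> bij_betw (clab N) (conds N) {(j, init (A j)) | j. j < n}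
           \<Longrightarrow> fin_bp A n N"
| extend: "\<lbrakk> fin_bp A n N; K \<in> reach_marks N; M \<subseteq> K; is_gtrans A n t;
             bij_betw (clab N) M (pre_set t);
             \<not> (\<exists>e'\<in>events N. elab N e' = t \<and> npre N e' = M);
             e \<notin> events N; Q \<inter> conds N = {};
             events N' = insert e (events N); conds N' = conds N \<union> Q;
             npre N' e = M; npost N' e = Q; elab N' e = t;
             bij_betw (clab N') Q (post_set t);
             agrees N N' \<rbrakk> \<Longrightarrow> fin_bp A n N'"

text \<open>Arbitrary branching processes: unions of countable directed families of
  (finitely generated) branching processes.\<close>
definition is_bp :: "(nat \<Rightarrow> ('a, 's) lts) \<Rightarrow> nat \<Rightarrow> ('b, 'e, 's) net \<Rightarrow> bool" where
  "is_bp A n N \<longleftrightarrow> (\<exists>F. countable F \<and> F \<noteq> {} \<and> (\<forall>N'\<in>F. fin_bp A n N')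
     \<and> (\<forall>N1\<in>F. \<forall>N2\<in>F. \<exists>N3\<in>F. subnet N1 N3 \<and> subnet N2 N3)
     \<and> conds N = (\<Union>N'\<in>F. conds N') \<and> events N = (\<Union>N'\<in>F. events N')
     \<and> (\<forall>N'\<in>F. agrees N' N))"

definition flow :: "('b, 'e, 's) net \<Rightarrow> ('b + 'e) rel" where
  "flow N = {(Inl b, Inr e) | b e. e \<in> events N \<and> b \<in> npre N e}
          \<union> {(Inr e, Inl b) | e b. e \<in> events N \<and> b \<in> npost N e}"

definition node_lt :: "('b, 'e, 's) net \<Rightarrow> ('b + 'e) \<Rightarrow> ('b + 'e) \<Rightarrow> bool" where
  "node_lt N x y \<longleftrightarrow> (x, y) \<in> (flow N)\<^sup>+"

definition ev_lt :: "('b, 'e, 's) net \<Rightarrow> 'e \<Rightarrow> 'e \<Rightarrow> bool" where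
  "ev_lt N e e' \<longleftrightarrow> node_lt N (Inr e) (Inr e')"

definition cond_lt :: "('b, 'e, 's) net \<Rightarrow> 'b \<Rightarrow> 'b \<Rightarrow> bool" where
  "cond_lt N b b' \<longleftrightarrow> node_lt N (Inl b) (Inl b')"

definition local_conf :: "('b, 'e, 's) net \<Rightarrow> 'e \<Rightarrow> 'e set" where
  "local_conf N e = {e' \<in> events N. e' = e \<or> ev_lt N e' e}"

definition Mark :: "('b, 'e, 's) net \<Rightarrow> 'e \<Rightarrow> 'b set" where
  "Mark N e = (THE K. \<exists>es. distinct es \<and> set es = local_conf N e
                         \<and> fire_list N (init_mark N) es = Some K)"

definition strong_cause :: "('b, 'e, 's) net \<Rightarrow> 'e \<Rightarrow> 'e \<Rightarrow> bool" where
  "strong_cause N e' e \<longleftrightarrow> ev_lt N e' e \<and>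
     (\<forall>b \<in> Mark N e - Mark N e'. \<forall>b' \<in> Mark N e' - Mark N e. cond_lt N b' b)"

end

theory Submission
  imports Defs
begin

text \<open>Branching processes satisfy a few structural invariants: an event consumes and produces
  exactly one condition in each component it involves, every condition has a unique producer,
  causality is acyclic and local configurations are conflict-free. Hence the cut of a finite
  configuration carries at most one condition per component, and two events of a configuration
  consuming on the same component are causally ordered.

  Along a chain \<open>e\<^sub>1 < e\<^sub>2 < \<dots>\<close>, call a component recurrent if it is consumed arbitrarily
  late. Only finitely many events of the chain's past fail to lie above a given \<open>e\<^sub>i\<close>, so from
  some index on every event of the past consumes only recurrent components. For such an
  \<open>e\<^sub>i\<close> choose \<open>r\<close> such that all consumers of conditions of \<open>M(e\<^sub>i)\<close> lie below \<open>e\<^sub>r\<close>, and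
  \<open>m > r\<close> such that every recurrent component is consumed above \<open>e\<^sub>r\<close> within \<open>[e\<^sub>m]\<close>. A
  condition lost between \<open>M(e\<^sub>i)\<close> and \<open>M(e\<^sub>m)\<close> is consumed below \<open>e\<^sub>r\<close>, and a new one is
  produced by an event \<open>p\<close> whose component is consumed again by some \<open>z\<close> above \<open>e\<^sub>r\<close> with
  \<open>z \<le> p\<close>; so the lost condition precedes the new one, and \<open>e\<^sub>i \<lless> e\<^sub>m\<close>. Iterating
  gives the subchain.\<close>

section \<open>Event steps and local configurations\<close>

definition ev_step :: "('b, 'e, 's) net \<Rightarrow> ('e \<times> 'e) set" where
  "ev_step N = {(x, y). x \<in> events N \<and> y \<in> events N \<and> npost N x \<inter> npre N y \<noteq> {}}"

lemma ev_step_events: "(x, y) \<in> ev_step N \<Longrightarrow> x \<in> events N \<and> y \<in> events N"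
  unfolding ev_step_def by blast

lemma trancl_ev_step_events: "(x, y) \<in> (ev_step N)\<^sup>+ \<Longrightarrow> x \<in> events N \<and> y \<in> events N"
  by (induction rule: trancl_induct) (auto dest: ev_step_events)

lemma ev_step_flow: "(x, y) \<in> ev_step N \<Longrightarrow> (Inr x, Inr y) \<in> (flow N)\<^sup>+"
proof -
  assume "(x, y) \<in> ev_step N"
  then obtain c where "(Inr x, Inl c) \<in> flow N" "(Inl c, Inr y) \<in> flow N"
    unfolding ev_step_def flow_def by blast
  then show ?thesis by (meson r_into_trancl trancl_into_trancl)
qed

lemma trancl_ev_step_flow: "(x, y) \<in> (ev_step N)\<^sup>+ \<Longrightarrow> (Inr x, Inr y) \<in> (flow N)\<^sup>+"
  by (induction rule: trancl_induct) (auto dest: ev_step_flow intro: trancl_trans)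

text \<open>Strengthened for the induction along the bipartite flow graph.\<close>

lemma flow_trancl_from_event:
  assumes "(a, b) \<in> (flow N)\<^sup>+"
  shows "(\<forall>x c. a = Inr x \<longrightarrow> b = Inl c \<longrightarrow>
            (\<exists>y. (x, y) \<in> (ev_step N)\<^sup>* \<and> y \<in> events N \<and> c \<in> npost N y))
       \<and> (\<forall>x y. a = Inr x \<longrightarrow> b = Inr y \<longrightarrow> (x, y) \<in> (ev_step N)\<^sup>+)"
  using assms
proof (induction rule: trancl_induct)
  case (base b)
  then show ?case unfolding flow_def by blast
next
  case (step b c')
  show ?case
  proof (intro conjI allI impI)
    fix x c assume a: "a = Inr x" and c: "c' = Inl c"
    from step.hyps(2) c obtain z where z: "b = Inr z" "z \<in> events N" "c \<in> npost N z"
      unfolding flow_def by blast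
    from step.IH a z(1) have "(x, z) \<in> (ev_step N)\<^sup>*" by (blast intro: trancl_into_rtrancl)
    then show "\<exists>y. (x, y) \<in> (ev_step N)\<^sup>* \<and> y \<in> events N \<and> c \<in> npost N y" using z by blast
  next
    fix x y assume a: "a = Inr x" and c: "c' = Inr y"
    from step.hyps(2) c obtain d where d: "b = Inl d" "y \<in> events N" "d \<in> npre N y"
      unfolding flow_def by blast
    from step.IH a d(1) obtain z where z: "(x, z) \<in> (ev_step N)\<^sup>*" "z \<in> events N" "d \<in> npost N z"
      by blast
    have "(z, y) \<in> ev_step N" using d z unfolding ev_step_def by blast
    with z(1) show "(x, y) \<in> (ev_step N)\<^sup>+" by (rule rtrancl_into_trancl1)
  qed
qed

lemma ev_lt_iff_trancl: "ev_lt N x y \<longleftrightarrow> (x, y) \<in> (ev_step N)\<^sup>+"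
  using flow_trancl_from_event[of "Inr x" "Inr y" N] trancl_ev_step_flow[of x y N]
  unfolding ev_lt_def node_lt_def by blast

lemma cond_ltI:
  assumes "b' \<in> npre N d" "d \<in> events N" "(d, p) \<in> (ev_step N)\<^sup>*" "p \<in> events N" "b \<in> npost N p"
  shows "cond_lt N b' b"
proof -
  have "(Inl b', Inr d) \<in> flow N" "(Inr p, Inl b) \<in> flow N"
    using assms unfolding flow_def by blast+
  moreover have "(Inr d, Inr p) \<in> (flow N)\<^sup>*"
    using assms(3) trancl_ev_step_flow[of d p N] by (auto simp: rtrancl_eq_or_trancl)
  ultimately show ?thesis
    unfolding cond_lt_def node_lt_def by (meson rtrancl_into_trancl2 trancl_into_trancl)
qed

lemma trancl_chain:
  assumes "\<And>i. (f i, f (Suc i)) \<in> r\<^sup>+" "i < k"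
  shows "(f i, f k) \<in> r\<^sup>+"
  using assms(2)
proof (induction k)
  case (Suc k)
  then show ?case using assms(1) by (metis less_Suc_eq trancl_trans)
qed simp

lemma local_conf_iff: "x \<in> local_conf N e \<longleftrightarrow> x \<in> events N \<and> (x = e \<or> (x, e) \<in> (ev_step N)\<^sup>+)"
  unfolding local_conf_def ev_lt_iff_trancl by blast

lemma local_conf_events: "local_conf N e \<subseteq> events N"
  unfolding local_conf_def by blast

lemma local_conf_self: "e \<in> events N \<Longrightarrow> e \<in> local_conf N e"
  unfolding local_conf_def by blast

lemma local_conf_mono: "x \<in> local_conf N e \<Longrightarrow> local_conf N x \<subseteq> local_conf N e"
  by (auto simp: local_conf_iff intro: trancl_trans)

lemma local_conf_mono_trancl: "(x, e) \<in> (ev_step N)\<^sup>+ \<Longrightarrow> local_conf N x \<subseteq> local_conf N e"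
  by (rule local_conf_mono) (auto simp: local_conf_iff dest: trancl_ev_step_events)

section \<open>Cuts of configurations in well-formed branching processes\<close>

definition preset :: "('b, 'e, 's) net \<Rightarrow> 'e set \<Rightarrow> 'b set" where
  "preset N X = \<Union> (npre N ` X)"

definition postset :: "('b, 'e, 's) net \<Rightarrow> 'e set \<Rightarrow> 'b set" where
  "postset N X = \<Union> (npost N ` X)"

definition cut_of :: "('b, 'e, 's) net \<Rightarrow> 'e set \<Rightarrow> 'b set" where
  "cut_of N X = (init_mark N \<union> postset N X) - preset N X"

definition causally_closed :: "('b, 'e, 's) net \<Rightarrow> 'e set \<Rightarrow> bool" where
  "causally_closed N X \<longleftrightarrow> X \<subseteq> events N \<and> (\<forall>y\<in>X. \<forall>x. (x, y) \<in> ev_step N \<longrightarrow> x \<in> X)"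

definition conflict_free :: "('b, 'e, 's) net \<Rightarrow> 'e set \<Rightarrow> bool" where
  "conflict_free N X \<longleftrightarrow> (\<forall>x\<in>X. \<forall>y\<in>X. x \<noteq> y \<longrightarrow> npre N x \<inter> npre N y = {})"

definition fin_config :: "('b, 'e, 's) net \<Rightarrow> 'e set \<Rightarrow> bool" where
  "fin_config N X \<longleftrightarrow> finite X \<and> causally_closed N X \<and> conflict_free N X"

definition comp_of :: "('b, 'e, 's) net \<Rightarrow> 'b \<Rightarrow> nat" where
  "comp_of N b = fst (clab N b)"

lemma conflict_free_subset: "conflict_free N X \<Longrightarrow> Y \<subseteq> X \<Longrightarrow> conflict_free N Y"
  unfolding conflict_free_def by blast

lemma causally_closed_local_conf: "causally_closed N (local_conf N e)"
  unfolding causally_closed_def by (auto simp: local_conf_iff dest: ev_step_events intro: trancl_into_trancl2)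

lemma causally_closed_Un:
  "causally_closed N X \<Longrightarrow> causally_closed N Y \<Longrightarrow> causally_closed N (X \<union> Y)"
  unfolding causally_closed_def by blast

lemma causally_closed_Diff:
  assumes "causally_closed N X" "\<forall>s\<in>S. \<forall>w\<in>X - S. (s, w) \<notin> ev_step N"
  shows "causally_closed N (X - S)"
  using assms unfolding causally_closed_def by blast

lemma exists_topological_listing:
  assumes "finite X" "causally_closed N X" "acyclic (ev_step N)"
  shows "\<exists>es. distinct es \<and> set es = X \<and>
           (\<forall>i<length es. \<forall>x. (x, es ! i) \<in> ev_step N \<longrightarrow> x \<in> set (take i es))"
  using assms(1,2)
proof (induction X rule: finite_remove_induct)
  case empty
  then show ?case by simp
next
  case (remove A)
  have "finite (Restr ((ev_step N)\<inverse>) A)"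
    by (rule finite_Int[OF disjI2]) (use remove.hyps(1) in simp)
  moreover have "acyclic (Restr ((ev_step N)\<inverse>) A)"
    by (rule acyclic_subset[OF _ Int_lower1]) (simp add: acyclic_converse assms(3))
  ultimately have "wf (Restr ((ev_step N)\<inverse>) A)" by (rule finite_acyclic_wf)
  then obtain m where m: "m \<in> A" "\<And>y. (y, m) \<in> Restr ((ev_step N)\<inverse>) A \<Longrightarrow> y \<notin> A"
    using remove.hyps(2) wfE_min by (metis equals0I)
  then have m_max: "(m, y) \<notin> ev_step N" if "y \<in> A" for y
    using that by blast
  have "causally_closed N (A - {m})"
    by (rule causally_closed_Diff[OF remove.prems]) (use m_max in blast)
  then obtain es where es: "distinct es" "set es = A - {m}"
    "\<forall>i<length es. \<forall>x. (x, es ! i) \<in> ev_step N \<longrightarrow> x \<in> set (take i es)"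
    using remove.IH[OF m(1)] by blast
  have m_preds: "x \<in> A - {m}" if "(x, m) \<in> ev_step N" for x
  proof -
    have "x \<in> A" using remove.prems m(1) that unfolding causally_closed_def by blast
    then show ?thesis using m_max[of m] m(1) that by blast
  qed
  have "\<forall>i<length (es @ [m]). \<forall>x. (x, (es @ [m]) ! i) \<in> ev_step N \<longrightarrow> x \<in> set (take i (es @ [m]))"
  proof (intro allI impI)
    fix i x assume i: "i < length (es @ [m])" and x: "(x, (es @ [m]) ! i) \<in> ev_step N"
    show "x \<in> set (take i (es @ [m]))"
    proof (cases "i < length es")
      case True
      then show ?thesis using es(3) x by (simp add: nth_append)
    next
      case False
      then have "i = length es" using i by simp
      then show ?thesis using x m_preds es(2) by simp
    qed
  qed
  moreover have "distinct (es @ [m])" "set (es @ [m]) = A" using es(1,2) m(1) by auto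
  ultimately show ?case by (intro exI[of _ "es @ [m]"]) simp
qed

lemma inj_on_replace:
  assumes "inj_on f K" "P \<subseteq> K" "inj_on f Q" "f ` P = f ` Q"
  shows "inj_on f ((K - P) \<union> Q)"
proof -
  have "f ` (K - P) = f ` K - f ` P" using assms(1,2) by (simp add: inj_on_image_set_diff)
  then have "f ` (K - P) \<inter> f ` Q = {}" using assms(4) by blast
  moreover have "inj_on f (K - P)" using assms(1) by (rule inj_on_subset) blast
  ultimately show ?thesis using assms(3) by (simp add: inj_on_Un) blast
qed

locale wf_bp =
  fixes n :: nat and N :: "('b, 'e, 's) net"
  assumes npre_conds: "e \<in> events N \<Longrightarrow> npre N e \<subseteq> conds N"
    and npost_conds: "e \<in> events N \<Longrightarrow> npost N e \<subseteq> conds N"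
    and npre_nonempty: "e \<in> events N \<Longrightarrow> npre N e \<noteq> {}"
    and inj_npre: "e \<in> events N \<Longrightarrow> inj_on (comp_of N) (npre N e)"
    and inj_npost: "e \<in> events N \<Longrightarrow> inj_on (comp_of N) (npost N e)"
    and comp_npre_npost: "e \<in> events N \<Longrightarrow> comp_of N ` npre N e = comp_of N ` npost N e"
    and unique_producer:
      "\<lbrakk>x \<in> events N; y \<in> events N; npost N x \<inter> npost N y \<noteq> {}\<rbrakk> \<Longrightarrow> x = y"
    and comp_less: "b \<in> conds N \<Longrightarrow> comp_of N b < n"
    and inj_init_mark: "inj_on (comp_of N) (init_mark N)"
    and acyclic_ev_step: "acyclic (ev_step N)"
    and conflict_free_local_conf: "e \<in> events N \<Longrightarrow> conflict_free N (local_conf N e)"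
begin

lemma ev_step_trancl_irrefl: "(x, x) \<notin> (ev_step N)\<^sup>+"
  using acyclic_ev_step unfolding acyclic_def by blast

lemma fire_list_eq:
  assumes "fire_list N K es = Some K'" "distinct es" "set es \<subseteq> events N"
    "K \<inter> postset N (set es) = {}"
  shows "K' = (K \<union> postset N (set es)) - preset N (set es)"
  using assms
proof (induction es arbitrary: K)
  case Nil
  then show ?case by (simp add: postset_def preset_def)
next
  case (Cons x rest)
  from Cons.prems(1) have x: "npre N x \<subseteq> K"
    and f: "fire_list N ((K - npre N x) \<union> npost N x) rest = Some K'"
    by (auto split: if_splits)
  have "npost N x \<inter> npost N y = {}" if "y \<in> set rest" for y
    using that Cons.prems(2,3) unique_producer[of x y] by auto
  then have "((K - npre N x) \<union> npost N x) \<inter> postset N (set rest) = {}"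
    using Cons.prems(4) unfolding postset_def by auto
  then have IH: "K' = (((K - npre N x) \<union> npost N x) \<union> postset N (set rest)) - preset N (set rest)"
    using Cons.IH[OF f] Cons.prems(2,3) by auto
  have "K \<inter> (npost N x \<union> postset N (set rest)) = {}"
    using Cons.prems(4) unfolding postset_def by auto
  then show ?case unfolding IH using x unfolding postset_def preset_def by auto
qed

lemma fire_list_Some:
  assumes "distinct es" "set es \<subseteq> events N" "conflict_free N (set es)"
    "K \<inter> postset N (set es) = {}"
    "\<forall>i<length es. npre N (es ! i) \<subseteq> K \<union> postset N (set (take i es))"
  shows "fire_list N K es = Some ((K \<union> postset N (set es)) - preset N (set es))"
  using assms
proof (induction es arbitrary: K)
  case Nil
  then show ?case by (simp add: postset_def preset_def)
next
  case (Cons x rest)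
  have x: "x \<in> events N" using Cons.prems(2) by simp
  have px: "npre N x \<subseteq> K" using Cons.prems(5)[rule_format, of 0] by (simp add: postset_def)
  define K1 where "K1 = (K - npre N x) \<union> npost N x"
  have "npost N x \<inter> npost N y = {}" if "y \<in> set rest" for y
    using that Cons.prems(1,2) unique_producer[of x y] by auto
  then have K1_post: "K1 \<inter> postset N (set rest) = {}"
    using Cons.prems(4) unfolding postset_def K1_def by auto
  have K1_pre: "\<forall>i<length rest. npre N (rest ! i) \<subseteq> K1 \<union> postset N (set (take i rest))"
  proof (intro allI impI)
    fix i assume i: "i < length rest"
    have "npre N (rest ! i) \<subseteq> K \<union> npost N x \<union> postset N (set (take i rest))"
      using Cons.prems(5)[rule_format, of "Suc i"] i by (auto simp: postset_def)
    moreover have "npre N (rest ! i) \<inter> npre N x = {}"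
      using Cons.prems(1,3) i unfolding conflict_free_def by (metis distinct.simps(2) list.set_intros nth_mem)
    ultimately show "npre N (rest ! i) \<subseteq> K1 \<union> postset N (set (take i rest))"
      unfolding K1_def by blast
  qed
  have "conflict_free N (set rest)"
    using Cons.prems(3) by (rule conflict_free_subset) auto
  then have IH: "fire_list N K1 rest = Some ((K1 \<union> postset N (set rest)) - preset N (set rest))"
    using Cons.IH[OF _ _ _ K1_post K1_pre] Cons.prems(1,2) by auto
  have "K \<inter> (npost N x \<union> postset N (set rest)) = {}"
    using Cons.prems(4) unfolding postset_def by auto
  then have "(K1 \<union> postset N (set rest)) - preset N (set rest)
      = (K \<union> postset N (set (x # rest))) - preset N (set (x # rest))"
    unfolding K1_def using px unfolding postset_def preset_def by auto
  then show ?case using x px IH K1_def by simp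
qed

lemma inj_on_fire_list:
  assumes "fire_list N K es = Some K'" "inj_on (comp_of N) K"
  shows "inj_on (comp_of N) K'"
  using assms
proof (induction es arbitrary: K)
  case (Cons x rest)
  from Cons.prems(1) have x: "x \<in> events N" "npre N x \<subseteq> K"
    and f: "fire_list N ((K - npre N x) \<union> npost N x) rest = Some K'"
    by (auto split: if_splits)
  have "inj_on (comp_of N) ((K - npre N x) \<union> npost N x)"
    by (rule inj_on_replace[OF Cons.prems(2) x(2) inj_npost[OF x(1)] comp_npre_npost[OF x(1)]])
  then show ?case by (rule Cons.IH[OF f])
qed simp

lemma init_mark_postset_disjoint: "X \<subseteq> events N \<Longrightarrow> init_mark N \<inter> postset N X = {}"
  unfolding init_mark_def postset_def by blast

lemma fire_list_cut:
  assumes "fin_config N X"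
  shows "\<exists>es. distinct es \<and> set es = X \<and> fire_list N (init_mark N) es = Some (cut_of N X)"
proof -
  have X: "finite X" "causally_closed N X" "conflict_free N X" "X \<subseteq> events N"
    using assms unfolding fin_config_def causally_closed_def by auto
  obtain es where es: "distinct es" "set es = X"
    "\<forall>i<length es. \<forall>x. (x, es ! i) \<in> ev_step N \<longrightarrow> x \<in> set (take i es)"
    using exists_topological_listing[OF X(1,2) acyclic_ev_step] by blast
  have "npre N (es ! i) \<subseteq> init_mark N \<union> postset N (set (take i es))"
    if i: "i < length es" for i
  proof
    fix b assume b: "b \<in> npre N (es ! i)"
    have ei: "es ! i \<in> events N" using i es(2) X(4) by auto
    show "b \<in> init_mark N \<union> postset N (set (take i es))"
    proof (cases "\<exists>y\<in>events N. b \<in> npost N y")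
      case True
      then obtain y where y: "y \<in> events N" "b \<in> npost N y" by blast
      then have "(y, es ! i) \<in> ev_step N" using ei b unfolding ev_step_def by blast
      then have "y \<in> set (take i es)" using es(3) i by blast
      then show ?thesis using y unfolding postset_def by blast
    next
      case False
      then show ?thesis using npre_conds[OF ei] b unfolding init_mark_def by blast
    qed
  qed
  then have "fire_list N (init_mark N) es = Some (cut_of N X)"
    using fire_list_Some[OF es(1)] es(2) X(3,4) init_mark_postset_disjoint[of X]
    unfolding cut_of_def by simp
  then show ?thesis using es(1,2) by blast
qed

lemma inj_on_cut: "fin_config N X \<Longrightarrow> inj_on (comp_of N) (cut_of N X)"
  using fire_list_cut inj_on_fire_list inj_init_mark by blast

lemma fin_config_local_conf:
  "e \<in> events N \<Longrightarrow> finite (local_conf N e) \<Longrightarrow> fin_config N (local_conf N e)"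
  by (simp add: fin_config_def causally_closed_local_conf conflict_free_local_conf)

lemma Mark_eq_cut:
  assumes "e \<in> events N" "finite (local_conf N e)"
  shows "Mark N e = cut_of N (local_conf N e)"
  unfolding Mark_def
proof (rule the_equality)
  show "\<exists>es. distinct es \<and> set es = local_conf N e
          \<and> fire_list N (init_mark N) es = Some (cut_of N (local_conf N e))"
    by (rule fire_list_cut[OF fin_config_local_conf[OF assms]])
next
  fix K
  assume "\<exists>es. distinct es \<and> set es = local_conf N e \<and> fire_list N (init_mark N) es = Some K"
  then obtain es where es: "distinct es" "set es = local_conf N e"
    "fire_list N (init_mark N) es = Some K"
    by blast
  then show "K = cut_of N (local_conf N e)"
    using fire_list_eq[OF es(3,1)] local_conf_events[of N e]
      init_mark_postset_disjoint[of "local_conf N e"]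
    unfolding cut_of_def by simp
qed

lemma npre_subset_cut:
  assumes x: "x \<in> events N" "x \<notin> Y" and cf: "conflict_free N (insert x Y)"
    and below: "local_conf N x - {x} \<subseteq> Y"
  shows "npre N x \<subseteq> cut_of N Y"
proof
  fix b assume b: "b \<in> npre N x"
  have "b \<in> init_mark N \<union> postset N Y"
  proof (cases "\<exists>w\<in>events N. b \<in> npost N w")
    case True
    then obtain w where w: "w \<in> events N" "b \<in> npost N w" by blast
    then have "(w, x) \<in> ev_step N" using b x(1) unfolding ev_step_def by blast
    then have "w \<in> local_conf N x - {x}"
      using w(1) ev_step_trancl_irrefl by (auto simp: local_conf_iff)
    then show ?thesis using below w(2) unfolding postset_def by blast
  next
    case False
    then show ?thesis using npre_conds[OF x(1)] b unfolding init_mark_def by blast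
  qed
  moreover have "b \<notin> preset N Y"
  proof
    assume "b \<in> preset N Y"
    then obtain w where "w \<in> Y" "b \<in> npre N w" unfolding preset_def by blast
    moreover have "w \<noteq> x" using \<open>w \<in> Y\<close> x(2) by blast
    ultimately show False using cf b unfolding conflict_free_def by blast
  qed
  ultimately show "b \<in> cut_of N Y" unfolding cut_of_def by blast
qed

text \<open>Otherwise both events would be enabled at a common cut, where the component carries
  only one condition.\<close>

lemma comparable_if_same_comp:
  assumes e: "e \<in> events N" "finite (local_conf N e)"
    and x: "x \<in> local_conf N e" and y: "y \<in> local_conf N e"
    and jx: "j \<in> comp_of N ` npre N x" and jy: "j \<in> comp_of N ` npre N y"
  shows "x = y \<or> (x, y) \<in> (ev_step N)\<^sup>+ \<or> (y, x) \<in> (ev_step N)\<^sup>+"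
proof (rule ccontr)
  assume incomparable: "\<not> ?thesis"
  define Y where "Y = (local_conf N x \<union> local_conf N y) - {x, y}"
  have lxy: "local_conf N x \<union> local_conf N y \<subseteq> local_conf N e"
    using local_conf_mono[OF x] local_conf_mono[OF y] by blast
  have no_succ: "(s, w) \<notin> ev_step N" if "s \<in> {x, y}" "w \<in> Y" for s w
  proof
    assume sw: "(s, w) \<in> ev_step N"
    have "(w, x) \<in> (ev_step N)\<^sup>+ \<or> (w, y) \<in> (ev_step N)\<^sup>+"
      using that(2) unfolding Y_def by (auto simp: local_conf_iff)
    then have "(s, x) \<in> (ev_step N)\<^sup>+ \<or> (s, y) \<in> (ev_step N)\<^sup>+"
      using sw by (meson trancl_into_trancl2)
    then show False using that(1) incomparable ev_step_trancl_irrefl by blast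
  qed
  have "causally_closed N Y"
    unfolding Y_def
    by (rule causally_closed_Diff[OF causally_closed_Un[OF causally_closed_local_conf
          causally_closed_local_conf]]) (use no_succ[unfolded Y_def] in blast)
  moreover have "finite Y" using e(2) lxy unfolding Y_def by (meson Diff_subset finite_subset subset_trans)
  moreover have cf_x: "conflict_free N (insert x Y)" and cf_y: "conflict_free N (insert y Y)"
    using conflict_free_subset[OF conflict_free_local_conf[OF e(1)]] lxy x y
    unfolding Y_def by (meson insert_subset subset_trans Diff_subset)+
  ultimately have inj: "inj_on (comp_of N) (cut_of N Y)"
    using conflict_free_subset[OF cf_x] by (intro inj_on_cut) (auto simp: fin_config_def)
  have xy_events: "x \<in> events N" "y \<in> events N" using x y by (simp_all add: local_conf_iff)
  have xy_notin: "x \<notin> Y" "y \<notin> Y" unfolding Y_def by auto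
  have "local_conf N x - {x} \<subseteq> Y" "local_conf N y - {y} \<subseteq> Y"
    using incomparable by (auto simp: Y_def local_conf_iff)
  then have pre_x: "npre N x \<subseteq> cut_of N Y" and pre_y: "npre N y \<subseteq> cut_of N Y"
    using npre_subset_cut xy_events xy_notin cf_x cf_y by blast+
  obtain bx where bx: "bx \<in> npre N x" "comp_of N bx = j" using jx by blast
  obtain by' where by': "by' \<in> npre N y" "comp_of N by' = j" using jy by blast
  have "bx = by'" using inj pre_x pre_y bx by' by (auto dest: inj_onD)
  moreover have "x \<noteq> y" using incomparable by blast
  ultimately show False
    using conflict_free_local_conf[OF e(1)] x y bx(1) by'(1) unfolding conflict_free_def by blast
qed

text \<open>Otherwise \<open>b\<close> survives in the cut just below \<open>z\<close>, where it is the only condition on its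
  component, so \<open>z\<close> consumes it.\<close>

lemma consumed_in_local_conf:
  assumes e: "e \<in> events N" "finite (local_conf N e)"
    and z: "z \<in> local_conf N e" and pz: "(p, z) \<in> (ev_step N)\<^sup>+"
    and b: "b \<in> npost N p" and bz: "comp_of N b \<in> comp_of N ` npre N z"
  shows "b \<in> preset N (local_conf N e)"
proof -
  define Y where "Y = local_conf N z - {z}"
  have lz: "local_conf N z \<subseteq> local_conf N e" by (rule local_conf_mono[OF z])
  have "causally_closed N Y"
    unfolding Y_def
    by (rule causally_closed_Diff[OF causally_closed_local_conf])
      (use ev_step_trancl_irrefl in \<open>auto simp: local_conf_iff dest: trancl_into_trancl2\<close>)
  moreover have "finite Y" using e(2) lz unfolding Y_def by (auto intro: finite_subset)
  moreover have cf: "conflict_free N (insert z Y)"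
    using conflict_free_local_conf[OF e(1)] lz z local_conf_self unfolding Y_def
    by (auto intro: conflict_free_subset)
  ultimately have inj: "inj_on (comp_of N) (cut_of N Y)"
    using conflict_free_subset by (intro inj_on_cut) (auto simp: fin_config_def)
  have ze: "z \<in> events N" using z by (simp add: local_conf_iff)
  have pre_z: "npre N z \<subseteq> cut_of N Y"
    by (rule npre_subset_cut[OF ze _ cf]) (auto simp: Y_def)
  show ?thesis
  proof (cases "b \<in> preset N Y")
    case True
    then show ?thesis using lz unfolding Y_def preset_def by blast
  next
    case False
    have "p \<in> Y"
      using pz ev_step_trancl_irrefl trancl_ev_step_events[OF pz] by (auto simp: Y_def local_conf_iff)
    then have "b \<in> cut_of N Y" using b False unfolding cut_of_def postset_def by blast
    moreover obtain b' where "b' \<in> npre N z" "comp_of N b' = comp_of N b" using bz by auto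
    ultimately have "b \<in> npre N z" using inj pre_z by (metis inj_onD subsetD)
    then show ?thesis using z unfolding preset_def by blast
  qed
qed

end

section \<open>Branching processes are well formed\<close>

definition history :: "('b, 'e, 's) net \<Rightarrow> 'b set \<Rightarrow> 'e set" where
  "history N K = {y \<in> events N. \<exists>z b. (y, z) \<in> (ev_step N)\<^sup>* \<and> z \<in> events N \<and> b \<in> K \<and> b \<in> npost N z}"

text \<open>An invariant of reachable markings; it makes the local configuration of a newly added
  event conflict-free.\<close>

definition history_inv :: "('b, 'e, 's) net \<Rightarrow> 'b set \<Rightarrow> bool" where
  "history_inv N K \<longleftrightarrow> conflict_free N (history N K) \<and> (\<forall>y\<in>history N K. npre N y \<inter> K = {})"

lemma history_inv_init_mark: "history_inv N (init_mark N)"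
proof -
  have "history N (init_mark N) = {}" unfolding history_def init_mark_def by blast
  then show ?thesis unfolding history_inv_def conflict_free_def by simp
qed

context wf_bp
begin

lemma history_fire_subset:
  assumes x: "x \<in> events N" "npre N x \<subseteq> K"
  shows "history N ((K - npre N x) \<union> npost N x) \<subseteq> insert x (history N K)"
proof
  fix y assume "y \<in> history N ((K - npre N x) \<union> npost N x)"
  then obtain z b where y: "y \<in> events N" "(y, z) \<in> (ev_step N)\<^sup>*" "z \<in> events N"
    "b \<in> (K - npre N x) \<union> npost N x" "b \<in> npost N z"
    unfolding history_def by blast
  show "y \<in> insert x (history N K)"
  proof (cases "b \<in> npost N x")
    case False
    then show ?thesis using y unfolding history_def by blast
  next
    case True
    then have "(y, x) \<in> (ev_step N)\<^sup>*" using unique_producer[OF y(3) x(1)] y(2,5) by blast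
    then show ?thesis
    proof (cases rule: rtranclE)
      case (step w)
      then obtain c where "c \<in> npost N w" "c \<in> npre N x" "w \<in> events N"
        unfolding ev_step_def by blast
      then show ?thesis using step(1) y(1) x(2) unfolding history_def by blast
    qed simp
  qed
qed

lemma history_inv_fire:
  assumes inv: "history_inv N K" and x: "x \<in> events N" "npre N x \<subseteq> K"
  shows "history_inv N ((K - npre N x) \<union> npost N x)"
proof -
  let ?K' = "(K - npre N x) \<union> npost N x"
  have cf: "conflict_free N (insert x (history N K))"
    using inv x(2) unfolding history_inv_def conflict_free_def by blast
  have "npre N y \<inter> ?K' = {}" if y: "y \<in> insert x (history N K)" for y
  proof (cases "y = x")
    case True
    have "(x, x) \<notin> ev_step N" using ev_step_trancl_irrefl by blast
    then show ?thesis using True x(1) unfolding ev_step_def by blast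
  next
    case False
    then have hy: "y \<in> history N K" using y by blast
    have "npre N y \<inter> npost N x = {}"
    proof (rule ccontr)
      assume "npre N y \<inter> npost N x \<noteq> {}"
      then have "(x, y) \<in> ev_step N" using x(1) hy unfolding ev_step_def history_def by blast
      then have "x \<in> history N K"
        using hy x(1) unfolding history_def by (blast intro: converse_rtrancl_into_rtrancl)
      then show False using inv x npre_nonempty[OF x(1)] unfolding history_inv_def by blast
    qed
    then show ?thesis using inv hy unfolding history_inv_def by blast
  qed
  moreover have "conflict_free N (history N ?K')"
    using conflict_free_subset[OF cf history_fire_subset[OF x]] .
  ultimately show ?thesis using history_fire_subset[OF x] unfolding history_inv_def by blast
qed

lemma history_inv_fire_list:
  assumes "fire_list N K0 es = Some K" "history_inv N K0" "K0 \<subseteq> conds N"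
  shows "history_inv N K \<and> K \<subseteq> conds N"
  using assms
proof (induction es arbitrary: K0)
  case (Cons x rest)
  from Cons.prems(1) have x: "x \<in> events N" "npre N x \<subseteq> K0"
    and f: "fire_list N ((K0 - npre N x) \<union> npost N x) rest = Some K"
    by (auto split: if_splits)
  show ?case
    using Cons.IH[OF f history_inv_fire[OF Cons.prems(2) x]] Cons.prems(3) npost_conds[OF x(1)]
    by blast
qed simp

lemma history_inv_reach_marks: "K \<in> reach_marks N \<Longrightarrow> history_inv N K \<and> K \<subseteq> conds N"
  unfolding reach_marks_def
  using history_inv_fire_list history_inv_init_mark init_mark_def by fastforce

end

lemma comp_of_bij_local_states:
  assumes "bij_betw (clab N) S {(j, g u) | j u. t j = Some u}"
  shows "inj_on (comp_of N) S" "comp_of N ` S = {j. t j \<noteq> None}"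
proof -
  have "clab N ` S = {(j, g u) | j u. t j = Some u}" "inj_on (clab N) S"
    using assms unfolding bij_betw_def by auto
  moreover have "inj_on fst {(j, g u) | j u. t j = Some u}"
    "fst ` {(j, g u) | j u. t j = Some u} = {j. t j \<noteq> None}"
    by (auto intro: inj_onI) force
  ultimately show "inj_on (comp_of N) S" "comp_of N ` S = {j. t j \<noteq> None}"
    unfolding comp_of_def by (auto simp: image_image[symmetric] intro: comp_inj_on[unfolded o_def])
qed

locale bp_extension = wf_bp n N
  for n :: nat and N :: "('b, 'e, 's) net" +
  fixes A :: "nat \<Rightarrow> ('a, 's) lts" and N' :: "('b, 'e, 's) net"
    and K M :: "'b set" and t :: "'s gtrans" and e :: 'e and Q :: "'b set"
  assumes reach: "K \<in> reach_marks N" and M_subset: "M \<subseteq> K" and gtrans: "is_gtrans A n t"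
    and bij_M: "bij_betw (clab N) M (pre_set t)"
    and fresh_event: "e \<notin> events N" and fresh_conds: "Q \<inter> conds N = {}"
    and events_ext: "events N' = insert e (events N)" and conds_ext: "conds N' = conds N \<union> Q"
    and npre_new: "npre N' e = M" and npost_new: "npost N' e = Q"
    and bij_Q: "bij_betw (clab N') Q (post_set t)" and agrees: "agrees N N'"
begin

lemma npre_old: "x \<in> events N \<Longrightarrow> npre N' x = npre N x"
  and npost_old: "x \<in> events N \<Longrightarrow> npost N' x = npost N x"
  using agrees unfolding agrees_def by auto

lemma comp_of_old: "b \<in> conds N \<Longrightarrow> comp_of N' b = comp_of N b"
  using agrees unfolding agrees_def comp_of_def by auto

lemma comp_of_old_cong:
  assumes "S \<subseteq> conds N"
  shows "inj_on (comp_of N') S \<longleftrightarrow> inj_on (comp_of N) S" "comp_of N' ` S = comp_of N ` S"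
  using assms comp_of_old by (auto intro!: inj_on_cong image_cong)

lemma M_conds: "M \<subseteq> conds N"
  using history_inv_reach_marks[OF reach] M_subset by blast

lemma comp_M: "inj_on (comp_of N') M" "comp_of N' ` M = {j. t j \<noteq> None}"
  using comp_of_bij_local_states[OF bij_M[unfolded pre_set_def]] comp_of_old_cong[OF M_conds]
  by simp_all

lemma comp_Q: "inj_on (comp_of N') Q" "comp_of N' ` Q = {j. t j \<noteq> None}"
  using comp_of_bij_local_states[OF bij_Q[unfolded post_set_def]] by simp_all

lemma t_idle_beyond: "n \<le> j \<Longrightarrow> t j = None" and t_nonidle: "\<exists>j. t j \<noteq> None"
  using gtrans unfolding is_gtrans_def gtrans_lab_def by blast+

text \<open>The new event has fresh outputs, so it has no successor and all new steps end in it.\<close>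

lemma ev_step_ext:
  assumes "(a, b) \<in> ev_step N'"
  shows "a \<in> events N \<and> ((a, b) \<in> ev_step N \<or> (b = e \<and> npost N a \<inter> M \<noteq> {}))"
proof -
  have ab: "a \<in> insert e (events N)" "b \<in> insert e (events N)" "npost N' a \<inter> npre N' b \<noteq> {}"
    using assms unfolding ev_step_def events_ext by blast+
  have "npre N' b \<subseteq> conds N"
    using ab(2) M_conds npre_new npre_old[of b] npre_conds[of b] by auto
  then have "a \<noteq> e" using ab(3) npost_new fresh_conds by blast
  then have "a \<in> events N" using ab(1) by blast
  then show ?thesis
    using ab(2,3) npre_new npre_old npost_old unfolding ev_step_def by auto
qed

lemma trancl_ev_step_ext:
  assumes "(a, b) \<in> (ev_step N')\<^sup>+"
  shows "(a, b) \<in> (ev_step N)\<^sup>+ \<or>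
    (b = e \<and> (\<exists>z. (a, z) \<in> (ev_step N)\<^sup>* \<and> z \<in> events N \<and> npost N z \<inter> M \<noteq> {}))"
  using assms
proof (induction rule: trancl_induct)
  case (base b)
  then show ?case using ev_step_ext by blast
next
  case (step b c)
  have "b \<noteq> e" using ev_step_ext[OF step.hyps(2)] fresh_event by blast
  then have ab: "(a, b) \<in> (ev_step N)\<^sup>+" using step.IH by blast
  from ev_step_ext[OF step.hyps(2)] show ?case
    using ab by (meson trancl_into_rtrancl trancl_into_trancl)
qed

lemma local_conf_old:
  assumes "x \<in> events N"
  shows "local_conf N' x \<subseteq> local_conf N x"
proof
  fix y assume "y \<in> local_conf N' x"
  then have "y = x \<or> (y, x) \<in> (ev_step N)\<^sup>+"
    using trancl_ev_step_ext[of y x] assms fresh_event by (auto simp: local_conf_iff)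
  then show "y \<in> local_conf N x" using assms by (auto simp: local_conf_iff dest: trancl_ev_step_events)
qed

lemma local_conf_new: "local_conf N' e - {e} \<subseteq> history N K"
proof
  fix y assume "y \<in> local_conf N' e - {e}"
  then have "(y, e) \<in> (ev_step N')\<^sup>+" by (auto simp: local_conf_iff)
  then obtain z where z: "(y, z) \<in> (ev_step N)\<^sup>*" "z \<in> events N" "npost N z \<inter> M \<noteq> {}"
    using trancl_ev_step_ext fresh_event by (blast dest: trancl_ev_step_events)
  moreover have "y \<in> events N"
    using z by (cases "y = z") (auto simp: rtrancl_eq_or_trancl dest: trancl_ev_step_events)
  ultimately show "y \<in> history N K" using M_subset unfolding history_def by blast
qed

lemma conflict_free_old: "X \<subseteq> events N \<Longrightarrow> conflict_free N' X \<longleftrightarrow> conflict_free N X"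
  unfolding conflict_free_def using npre_old by (metis subsetD)

lemma conflict_free_local_conf_new: "conflict_free N' (local_conf N' e)"
proof -
  have inv: "history_inv N K" using history_inv_reach_marks[OF reach] by blast
  have hist_events: "history N K \<subseteq> events N" unfolding history_def by blast
  then have "conflict_free N' (history N K)"
    using inv conflict_free_old unfolding history_inv_def by blast
  moreover have "npre N' e \<inter> npre N' y = {}" if "y \<in> history N K" for y
    using inv that M_subset npre_new npre_old[of y] hist_events unfolding history_inv_def by blast
  ultimately have "conflict_free N' (insert e (history N K))"
    unfolding conflict_free_def by (metis inf_commute insert_iff)
  then show ?thesis by (rule conflict_free_subset) (use local_conf_new in blast)
qed

lemma unique_producer_extended:
  assumes xy: "x \<in> events N'" "y \<in> events N'" "npost N' x \<inter> npost N' y \<noteq> {}"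
  shows "x = y"
proof (cases "x = e \<or> y = e")
  case True
  have "npost N' z \<inter> Q = {}" if "z \<in> events N" for z
    using that npost_conds[of z] fresh_conds npost_old[of z] by blast
  then show ?thesis using True xy npost_new events_ext by (metis inf_commute insert_iff)
next
  case False
  then show ?thesis using xy unique_producer[of x y] npost_old events_ext by auto
qed

lemma acyclic_ev_step_extended: "acyclic (ev_step N')"
  unfolding acyclic_def
proof (intro allI notI)
  fix x assume cycle: "(x, x) \<in> (ev_step N')\<^sup>+"
  then obtain y where "(x, y) \<in> ev_step N'" by (meson tranclD)
  then have "x \<noteq> e" using ev_step_ext fresh_event by blast
  then show False using trancl_ev_step_ext[OF cycle] ev_step_trancl_irrefl by blast
qed

lemma wf_bp_extended: "wf_bp n N'"
proof
  show "npre N' x \<subseteq> conds N'" if "x \<in> events N'" for x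
    using that M_conds npre_conds[of x] by (auto simp: events_ext conds_ext npre_new npre_old)
  show "npost N' x \<subseteq> conds N'" if "x \<in> events N'" for x
    using that npost_conds[of x] by (auto simp: events_ext conds_ext npost_new npost_old)
  show "npre N' x \<noteq> {}" if "x \<in> events N'" for x
    using that npre_nonempty[of x] comp_M(2) t_nonidle by (auto simp: events_ext npre_new npre_old)
  show "inj_on (comp_of N') (npre N' x)" if "x \<in> events N'" for x
    using that comp_M(1) inj_npre[of x] comp_of_old_cong npre_conds[of x]
    by (auto simp: events_ext npre_new npre_old)
  show "inj_on (comp_of N') (npost N' x)" if "x \<in> events N'" for x
    using that comp_Q(1) inj_npost[of x] comp_of_old_cong npost_conds[of x]
    by (auto simp: events_ext npost_new npost_old)
  show "comp_of N' ` npre N' x = comp_of N' ` npost N' x" if "x \<in> events N'" for x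
  proof (cases "x = e")
    case True
    then show ?thesis using comp_M(2) comp_Q(2) by (simp add: npre_new npost_new)
  next
    case False
    then have x: "x \<in> events N" using that events_ext by blast
    then show ?thesis
      using comp_npre_npost[OF x] comp_of_old_cong(2)[OF npre_conds[OF x]]
        comp_of_old_cong(2)[OF npost_conds[OF x]]
      by (simp add: npre_old npost_old)
  qed
  show "x = y" if "x \<in> events N'" "y \<in> events N'" "npost N' x \<inter> npost N' y \<noteq> {}" for x y
    using that by (rule unique_producer_extended)
  show "comp_of N' b < n" if "b \<in> conds N'" for b
  proof (cases "b \<in> Q")
    case True
    then have "t (comp_of N' b) \<noteq> None" using comp_Q(2) by blast
    then show ?thesis using t_idle_beyond by (meson not_le)
  next
    case False
    then show ?thesis using that comp_less comp_of_old by (auto simp: conds_ext)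
  qed
  have "init_mark N' \<subseteq> init_mark N"
    unfolding init_mark_def using fresh_conds npost_old
    by (auto simp: conds_ext events_ext npost_new)
  moreover have "init_mark N \<subseteq> conds N" unfolding init_mark_def by blast
  ultimately show "inj_on (comp_of N') (init_mark N')"
    using comp_of_old_cong(1) inj_on_subset[OF inj_init_mark] by (metis subset_trans)
  show "acyclic (ev_step N')" by (rule acyclic_ev_step_extended)
  show "conflict_free N' (local_conf N' x)" if "x \<in> events N'" for x
  proof (cases "x = e")
    case False
    then have x: "x \<in> events N" using that events_ext by blast
    then have "conflict_free N' (local_conf N x)"
      using conflict_free_old[OF local_conf_events] conflict_free_local_conf[OF x] by blast
    then show ?thesis using local_conf_old[OF x] by (rule conflict_free_subset)
  qed (simp add: conflict_free_local_conf_new)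
qed

end

lemma wf_bp_base:
  assumes "events N = {}" "bij_betw (clab N) (conds N) {(j, init (A j)) | j. j < n}"
  shows "wf_bp n N"
proof
  have labels: "\<exists>j<n. clab N b = (j, init (A j))" if "b \<in> conds N" for b
    using assms(2) that unfolding bij_betw_def by blast
  then show "comp_of N b < n" if "b \<in> conds N" for b
    using that unfolding comp_of_def by force
  have "inj_on (comp_of N) (conds N)"
  proof (rule inj_onI)
    fix b1 b2 assume b: "b1 \<in> conds N" "b2 \<in> conds N" "comp_of N b1 = comp_of N b2"
    then have "clab N b1 = clab N b2" using labels[OF b(1)] labels[OF b(2)] unfolding comp_of_def by auto
    then show "b1 = b2" using assms(2) b(1,2) unfolding bij_betw_def by (auto dest: inj_onD)
  qed
  then show "inj_on (comp_of N) (init_mark N)" unfolding init_mark_def by (simp add: assms(1))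
  show "acyclic (ev_step N)" using assms(1) by (simp add: ev_step_def acyclic_def)
qed (use assms(1) in auto)

lemma fin_bp_wf_bp: "fin_bp A n N \<Longrightarrow> wf_bp n N"
proof (induction rule: fin_bp.induct)
  case (base N)
  then show ?case by (rule wf_bp_base)
next
  case (extend N K M t e Q N')
  interpret bp_extension n N A N' K M t e Q
    by (rule bp_extension.intro[OF extend.IH], unfold_locales) (use extend.hyps in auto)
  show ?case by (rule wf_bp_extended)
qed

lemma subnet_ev_step: "subnet N1 N2 \<Longrightarrow> ev_step N1 \<subseteq> ev_step N2"
  unfolding subnet_def agrees_def ev_step_def by auto

lemma subnet_local_conf:
  assumes "subnet N1 N2"
  shows "local_conf N1 e \<subseteq> local_conf N2 e"
proof
  fix x assume "x \<in> local_conf N1 e"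
  then have "x \<in> events N1" "x = e \<or> (x, e) \<in> (ev_step N1)\<^sup>+" by (simp_all add: local_conf_iff)
  moreover have "events N1 \<subseteq> events N2" "(ev_step N1)\<^sup>+ \<subseteq> (ev_step N2)\<^sup>+"
    using assms subnet_ev_step[OF assms] unfolding subnet_def by (auto intro: trancl_mono)
  ultimately show "x \<in> local_conf N2 e" by (auto simp: local_conf_iff)
qed

context
  fixes n :: nat and N :: "('b, 'e, 's) net" and F :: "('b, 'e, 's) net set"
  assumes wf_F: "\<forall>N'\<in>F. wf_bp n N'"
    and directed: "\<forall>N1\<in>F. \<forall>N2\<in>F. \<exists>N3\<in>F. subnet N1 N3 \<and> subnet N2 N3"
    and conds_Union: "conds N = (\<Union>N'\<in>F. conds N')"
    and events_Union: "events N = (\<Union>N'\<in>F. events N')"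
    and agrees_F: "\<forall>N'\<in>F. agrees N' N"
begin

lemma npre_member: "N' \<in> F \<Longrightarrow> x \<in> events N' \<Longrightarrow> npre N x = npre N' x"
  and npost_member: "N' \<in> F \<Longrightarrow> x \<in> events N' \<Longrightarrow> npost N x = npost N' x"
  using agrees_F unfolding agrees_def by auto

lemma comp_of_member: "N' \<in> F \<Longrightarrow> b \<in> conds N' \<Longrightarrow> comp_of N b = comp_of N' b"
  using agrees_F unfolding agrees_def comp_of_def by auto

lemma comp_of_member_cong:
  assumes "N' \<in> F" "S \<subseteq> conds N'"
  shows "inj_on (comp_of N) S \<longleftrightarrow> inj_on (comp_of N') S" "comp_of N ` S = comp_of N' ` S"
  using assms comp_of_member by (auto intro!: inj_on_cong image_cong)

lemma upper_member:
  assumes "N1 \<in> F" "N2 \<in> F"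
  obtains N3 where "N3 \<in> F" "subnet N1 N3" "subnet N2 N3"
  using directed assms by blast

lemma common_member:
  assumes "x \<in> events N" "y \<in> events N"
  obtains N' where "N' \<in> F" "x \<in> events N'" "y \<in> events N'"
proof -
  obtain N1 N2 where N12: "N1 \<in> F" "x \<in> events N1" "N2 \<in> F" "y \<in> events N2"
    using assms events_Union by blast
  obtain N3 where "N3 \<in> F" "subnet N1 N3" "subnet N2 N3"
    using upper_member N12(1,3) by blast
  then show thesis using that N12(2,4) unfolding subnet_def by blast
qed

lemma ev_step_member: "(x, y) \<in> ev_step N \<Longrightarrow> \<exists>N'\<in>F. (x, y) \<in> ev_step N'"
proof -
  assume xy: "(x, y) \<in> ev_step N"
  obtain N' where N': "N' \<in> F" "x \<in> events N'" "y \<in> events N'"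
    using common_member ev_step_events[OF xy] by blast
  then have "(x, y) \<in> ev_step N'"
    using xy npre_member npost_member unfolding ev_step_def by auto
  then show ?thesis using N'(1) by blast
qed

lemma trancl_ev_step_member: "(x, y) \<in> (ev_step N)\<^sup>+ \<Longrightarrow> \<exists>N'\<in>F. (x, y) \<in> (ev_step N')\<^sup>+"
proof (induction rule: trancl_induct)
  case (base y)
  then show ?case using ev_step_member by blast
next
  case (step y z)
  obtain N1 where N1: "N1 \<in> F" "(x, y) \<in> (ev_step N1)\<^sup>+" using step.IH by blast
  obtain N2 where N2: "N2 \<in> F" "(y, z) \<in> ev_step N2" using ev_step_member step.hyps(2) by blast
  obtain N3 where N3: "N3 \<in> F" "subnet N1 N3" "subnet N2 N3" using upper_member N1(1) N2(1) by blast
  have "(x, y) \<in> (ev_step N3)\<^sup>+" using N1(2) subnet_ev_step[OF N3(2)] by (rule trancl_mono)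
  moreover have "(y, z) \<in> ev_step N3" using N2 N3 subnet_ev_step by blast
  ultimately show ?case using N3 by (meson trancl_into_trancl)
qed

lemma local_conf_member:
  assumes "x \<in> local_conf N e"
  shows "\<exists>N'\<in>F. x \<in> local_conf N' e"
proof (cases "x = e")
  case True
  then obtain N' where "N' \<in> F" "e \<in> events N'" using assms events_Union by (auto simp: local_conf_iff)
  then show ?thesis using True local_conf_self[of e N'] by blast
next
  case False
  then obtain N' where "N' \<in> F" "(x, e) \<in> (ev_step N')\<^sup>+"
    using assms trancl_ev_step_member by (auto simp: local_conf_iff)
  then show ?thesis by (auto simp: local_conf_iff dest: trancl_ev_step_events)
qed

lemma init_mark_member:
  assumes "N' \<in> F" "b \<in> init_mark N" "b \<in> conds N'"
  shows "b \<in> init_mark N'"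
proof -
  have "b \<notin> npost N' x" if "x \<in> events N'" for x
    using assms(1,2) that events_Union npost_member[OF assms(1) that] unfolding init_mark_def by blast
  then show ?thesis using assms(3) unfolding init_mark_def by blast
qed

lemma conflict_free_local_conf_Union: "conflict_free N (local_conf N e)"
  unfolding conflict_free_def
proof (intro ballI impI)
  fix x y assume x: "x \<in> local_conf N e" and y: "y \<in> local_conf N e" and xy: "x \<noteq> y"
  obtain N1 N2 where N12: "N1 \<in> F" "x \<in> local_conf N1 e" "N2 \<in> F" "y \<in> local_conf N2 e"
    using local_conf_member x y by blast
  obtain N3 where upper: "N3 \<in> F" "subnet N1 N3" "subnet N2 N3"
    using upper_member N12(1,3) by blast
  then have N3: "N3 \<in> F" "x \<in> local_conf N3 e" "y \<in> local_conf N3 e"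
    using N12(2,4) subnet_local_conf[OF upper(2)] subnet_local_conf[OF upper(3)] by blast+
  have e3: "e \<in> events N3" using N3(2) by (auto simp: local_conf_iff dest: trancl_ev_step_events)
  have "npre N3 x \<inter> npre N3 y = {}"
    using wf_bp.conflict_free_local_conf[of n N3 e] wf_F N3 e3 xy
    unfolding conflict_free_def by blast
  then show "npre N x \<inter> npre N y = {}"
    using npre_member[OF N3(1)] N3(2,3) by (simp add: local_conf_iff)
qed

lemma inj_on_comp_init_mark_Union: "inj_on (comp_of N) (init_mark N)"
proof (rule inj_onI)
  fix b1 b2 assume b: "b1 \<in> init_mark N" "b2 \<in> init_mark N" "comp_of N b1 = comp_of N b2"
  obtain N1 N2 where N12: "N1 \<in> F" "b1 \<in> conds N1" "N2 \<in> F" "b2 \<in> conds N2"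
    using conds_Union b(1,2) unfolding init_mark_def by blast
  obtain N3 where "N3 \<in> F" "subnet N1 N3" "subnet N2 N3"
    using upper_member N12(1,3) by blast
  then have N3: "N3 \<in> F" "b1 \<in> conds N3" "b2 \<in> conds N3"
    using N12(2,4) unfolding subnet_def by blast+
  have "b1 \<in> init_mark N3" "b2 \<in> init_mark N3" using init_mark_member N3 b(1,2) by blast+
  moreover have "comp_of N3 b1 = comp_of N3 b2" using b(3) comp_of_member[OF N3(1)] N3(2,3) by simp
  ultimately show "b1 = b2"
    using wf_bp.inj_init_mark[of n N3] wf_F N3(1) by (auto dest: inj_onD)
qed

lemma wf_bp_Union: "wf_bp n N"
proof
  fix x assume "x \<in> events N"
  then obtain N' where N': "N' \<in> F" "x \<in> events N'" using events_Union by blast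
  interpret N': wf_bp n N' using wf_F N'(1) by blast
  have conds: "conds N' \<subseteq> conds N" using conds_Union N'(1) by blast
  note pre_post = npre_member[OF N'] npost_member[OF N']
  show "npre N x \<subseteq> conds N" "npost N x \<subseteq> conds N" "npre N x \<noteq> {}"
    using N'.npre_conds[OF N'(2)] N'.npost_conds[OF N'(2)] N'.npre_nonempty[OF N'(2)] conds pre_post
    by auto
  show "inj_on (comp_of N) (npre N x)" "inj_on (comp_of N) (npost N x)"
    "comp_of N ` npre N x = comp_of N ` npost N x"
    using comp_of_member_cong[OF N'(1) N'.npre_conds[OF N'(2)]]
      comp_of_member_cong[OF N'(1) N'.npost_conds[OF N'(2)]]
      N'.inj_npre[OF N'(2)] N'.inj_npost[OF N'(2)] N'.comp_npre_npost[OF N'(2)] pre_post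
    by simp_all
next
  show "x = y" if xy: "x \<in> events N" "y \<in> events N" "npost N x \<inter> npost N y \<noteq> {}" for x y
  proof -
    obtain N' where N': "N' \<in> F" "x \<in> events N'" "y \<in> events N'"
      using common_member xy(1,2) by blast
    then show ?thesis
      using wf_bp.unique_producer[of n N' x y] wf_F xy(3) npost_member by auto
  qed
next
  show "comp_of N b < n" if "b \<in> conds N" for b
    using that conds_Union comp_of_member wf_bp.comp_less wf_F by fastforce
next
  show "inj_on (comp_of N) (init_mark N)" by (rule inj_on_comp_init_mark_Union)
next
  show "acyclic (ev_step N)"
  proof (unfold acyclic_def, intro allI notI)
    fix x assume "(x, x) \<in> (ev_step N)\<^sup>+"
    then obtain N' where "N' \<in> F" "(x, x) \<in> (ev_step N')\<^sup>+" using trancl_ev_step_member by blast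
    then show False using wf_F wf_bp.ev_step_trancl_irrefl[of n N' x] by blast
  qed
next
  show "conflict_free N (local_conf N e)" for e
    by (rule conflict_free_local_conf_Union)
qed

end

lemma is_bp_wf_bp: "is_bp A n N \<Longrightarrow> wf_bp n N"
  unfolding is_bp_def using wf_bp_Union fin_bp_wf_bp by metis

section \<open>Strong causes along an infinite chain\<close>

locale causal_chain = wf_bp n N
  for n :: nat and N :: "('b, 'e, 's) net" +
  fixes f :: "nat \<Rightarrow> 'e"
  assumes chain_events: "f i \<in> events N"
    and chain_step: "(f i, f (Suc i)) \<in> (ev_step N)\<^sup>+"
    and finite_past: "finite (local_conf N (f i))"
begin

abbreviation past :: "nat \<Rightarrow> 'e set" where
  "past i \<equiv> local_conf N (f i)"

definition past_all :: "'e set" where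
  "past_all = (\<Union>i. past i)"

abbreviation ev_le :: "'e \<Rightarrow> 'e \<Rightarrow> bool" where
  "ev_le x y \<equiv> (x, y) \<in> (ev_step N)\<^sup>*"

lemma chain_trancl: "i < k \<Longrightarrow> (f i, f k) \<in> (ev_step N)\<^sup>+"
  using trancl_chain chain_step by metis

lemma past_mono: "i \<le> k \<Longrightarrow> past i \<subseteq> past k"
  using chain_trancl local_conf_mono_trancl by (metis order.order_iff_strict order_refl)

lemma f_in_past: "f i \<in> past i"
  using chain_events local_conf_self by metis

lemma past_down:
  assumes "y \<in> past k" "ev_le x y"
  shows "x \<in> past k"
proof -
  have "y \<in> events N" using assms(1) by (simp add: local_conf_iff)
  then have "x \<in> local_conf N y"
    using assms(2) by (auto simp: local_conf_iff rtrancl_eq_or_trancl dest: trancl_ev_step_events)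
  then show ?thesis using local_conf_mono[OF assms(1)] by blast
qed

lemma past_all_events: "past_all \<subseteq> events N"
  unfolding past_all_def using local_conf_events[of N] by blast

lemma past_all_comp: "x \<in> past_all \<Longrightarrow> h \<in> comp_of N ` npre N x \<Longrightarrow> h < n"
  using past_all_events npre_conds comp_less by blast

lemma pick_past:
  assumes "finite H" "\<forall>h\<in>H. \<exists>z\<in>past_all. P h z"
  shows "\<exists>m\<ge>k. \<forall>h\<in>H. \<exists>z\<in>past m. P h z"
  using assms
proof (induction H rule: finite_induct)
  case (insert h H)
  then obtain m1 where m1: "m1 \<ge> k" "\<forall>h\<in>H. \<exists>z\<in>past m1. P h z" by blast
  obtain z m2 where z: "z \<in> past m2" "P h z" using insert.prems unfolding past_all_def by blast
  have "past m1 \<subseteq> past (max m1 m2)" "past m2 \<subseteq> past (max m1 m2)" by (simp_all add: past_mono)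
  then show ?case using m1 z by (intro exI[of _ "max m1 m2"]) fastforce
qed auto

lemma finite_subset_past:
  assumes "finite S" "S \<subseteq> past_all"
  shows "\<exists>m\<ge>k. S \<subseteq> past m"
  using pick_past[of S "\<lambda>h z. z = h" k] assms by blast

lemma past_all_comparable:
  assumes "x \<in> past_all" "y \<in> past_all" "j \<in> comp_of N ` npre N x" "j \<in> comp_of N ` npre N y"
  shows "x = y \<or> (x, y) \<in> (ev_step N)\<^sup>+ \<or> (y, x) \<in> (ev_step N)\<^sup>+"
proof -
  obtain m where "{x, y} \<subseteq> past m" using finite_subset_past[of "{x, y}" 0] assms(1,2) by auto
  then show ?thesis
    using comparable_if_same_comp[OF chain_events finite_past _ _ assms(3,4)] by blast
qed

lemma past_all_conflict_free: "conflict_free N past_all"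
  unfolding conflict_free_def
proof (intro ballI impI)
  fix x y assume "x \<in> past_all" "y \<in> past_all" "x \<noteq> y"
  moreover obtain m where "{x, y} \<subseteq> past m" using finite_subset_past[of "{x, y}" 0] calculation by auto
  ultimately show "npre N x \<inter> npre N y = {}"
    using conflict_free_local_conf[OF chain_events, of m] unfolding conflict_free_def by blast
qed

lemma below_consumer_above:
  assumes "x \<in> past_all" "u \<in> past_all"
    and "h \<in> comp_of N ` npost N x" "h \<in> comp_of N ` npre N u"
    and "ev_le (f i) u" "\<not> ev_le (f i) x"
  shows "(x, u) \<in> (ev_step N)\<^sup>+"
proof -
  have "x \<in> events N" using assms(1) past_all_events by blast
  then have "h \<in> comp_of N ` npre N x" using assms(3) comp_npre_npost by blast
  then have "x = u \<or> (x, u) \<in> (ev_step N)\<^sup>+ \<or> (u, x) \<in> (ev_step N)\<^sup>+"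
    using past_all_comparable assms(1,2,4) by blast
  then show ?thesis using assms(5,6) by (meson rtrancl_trans trancl_into_rtrancl)
qed

text \<open>An event of the past not above \<open>f i\<close> lies below a consumer above \<open>f i\<close> of one of the
  components it produces on; fix one such consumer per component.\<close>

lemma finite_not_above: "finite {x \<in> past_all. \<not> ev_le (f i) x}"
proof -
  define ok where "ok h \<longleftrightarrow> (\<exists>u\<in>past_all. h \<in> comp_of N ` npre N u \<and> ev_le (f i) u)" for h
  define U where "U h = (SOME u. u \<in> past_all \<and> h \<in> comp_of N ` npre N u \<and> ev_le (f i) u)" for h
  have U: "U h \<in> past_all \<and> h \<in> comp_of N ` npre N (U h) \<and> ev_le (f i) (U h)" if "ok h" for h
    using that unfolding ok_def U_def by (metis (mono_tags, lifting) someI_ex)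
  define F where "F = (\<Union>h\<in>{h. h < n \<and> ok h}. local_conf N (U h))"
  have "finite (local_conf N (U h))" if okh: "ok h" for h
  proof -
    obtain k where "U h \<in> past k" using U[OF okh] unfolding past_all_def by blast
    then show ?thesis using local_conf_mono finite_past by (meson finite_subset)
  qed
  then have "finite F" unfolding F_def by auto
  moreover have "{x \<in> past_all. \<not> ev_le (f i) x} \<subseteq> F"
  proof (intro subsetI, elim CollectE conjE)
    fix x assume x: "x \<in> past_all" "\<not> ev_le (f i) x"
    obtain k where k: "k \<ge> i" "x \<in> past k" using finite_subset_past[of "{x}" i] x(1) by auto
    then have "ev_le x (f k)" by (auto simp: local_conf_iff)
    have fik: "ev_le (f i) (f k)"
      using chain_trancl[of i k] k(1) by (cases "i = k") auto
    show "x \<in> F" using \<open>ev_le x (f k)\<close> x(2)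
    proof (induction rule: converse_rtrancl_induct)
      case (step x x2)
      have x2_past: "x2 \<in> past k" using past_down f_in_past step.hyps(2) by blast
      then have x_past: "x \<in> past k" using past_down step.hyps(1) by blast
      then have x_all: "x \<in> past_all" "x2 \<in> past_all" using x2_past unfolding past_all_def by blast+
      obtain c where c: "c \<in> npost N x" "c \<in> npre N x2" "x \<in> events N" "x2 \<in> events N"
        using step.hyps(1) unfolding ev_step_def by blast
      show ?case
      proof (cases "ev_le (f i) x2")
        case True
        define h where "h = comp_of N c"
        have hn: "h < n" using past_all_comp x_all(2) c(2) unfolding h_def by blast
        have ok: "ok h" unfolding ok_def h_def using x_all(2) c(2) True by blast
        have "(x, U h) \<in> (ev_step N)\<^sup>+"
          using below_consumer_above[OF x_all(1) _ _ _ _ step.prems] U[OF ok] c(1)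
          unfolding h_def by blast
        then have "x \<in> local_conf N (U h)" using c(3) unfolding local_conf_iff by blast
        then show ?thesis unfolding F_def using hn ok by blast
      next
        case False
        then obtain h where h: "h < n" "ok h" "x2 \<in> local_conf N (U h)"
          using step.IH unfolding F_def by blast
        then have "x \<in> local_conf N (U h)"
          using step.hyps(1) causally_closed_local_conf[of N "U h"] unfolding causally_closed_def by blast
        then show ?thesis unfolding F_def using h by blast
      qed
    qed (use fik in blast)
  qed
  ultimately show ?thesis by (rule finite_subset[rotated])
qed

definition recurrent_comp :: "nat \<Rightarrow> bool" where
  "recurrent_comp h \<longleftrightarrow> (\<forall>r. \<exists>z\<in>past_all. h \<in> comp_of N ` npre N z \<and> ev_le (f r) z)"

lemma eventually_recurrent:
  "\<exists>s. \<forall>x\<in>past_all - past s. \<forall>h\<in>comp_of N ` npre N x. recurrent_comp h"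
proof -
  define S where "S = (\<Union>h\<in>{h. h < n \<and> \<not> recurrent_comp h}. {z\<in>past_all. h \<in> comp_of N ` npre N z})"
  have "finite {z\<in>past_all. h \<in> comp_of N ` npre N z}" if not_rec: "\<not> recurrent_comp h" for h
  proof -
    obtain r where "\<forall>z\<in>past_all. h \<in> comp_of N ` npre N z \<longrightarrow> \<not> ev_le (f r) z"
      using not_rec unfolding recurrent_comp_def by blast
    then have "{z\<in>past_all. h \<in> comp_of N ` npre N z} \<subseteq> {x \<in> past_all. \<not> ev_le (f r) x}" by blast
    then show ?thesis using finite_not_above by (rule finite_subset)
  qed
  then have "finite S" unfolding S_def by auto
  moreover have "S \<subseteq> past_all" unfolding S_def by blast
  ultimately obtain s where "S \<subseteq> past s" using finite_subset_past[of S 0] by blast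
  then have "recurrent_comp h" if "x \<in> past_all - past s" "h \<in> comp_of N ` npre N x" for x h
    using that past_all_comp unfolding S_def by blast
  then show ?thesis by blast
qed

lemma Mark_past: "Mark N (f i) = cut_of N (past i)"
  using Mark_eq_cut[OF chain_events finite_past] .

lemma finite_cut_past: "finite (cut_of N (past i))"
proof -
  have "cut_of N (past i) \<subseteq> conds N"
    unfolding cut_of_def init_mark_def postset_def
    using local_conf_events[of N "f i"] npost_conds by blast
  then have "comp_of N ` cut_of N (past i) \<subseteq> {..<n}" using comp_less by auto
  then have "finite (comp_of N ` cut_of N (past i))" by (rule finite_subset) simp
  then show ?thesis
    using inj_on_cut[OF fin_config_local_conf[OF chain_events finite_past]] finite_imageD by blast
qed

text \<open>The lost condition \<open>b'\<close> is consumed below \<open>f r\<close>; the new condition \<open>b\<close> is produced by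
  some \<open>p\<close> whose component is recurrent, hence consumed above \<open>f r\<close> by some \<open>z \<le> p\<close>.\<close>

lemma cond_lt_cut_change:
  assumes s: "\<forall>x\<in>past_all - past s. \<forall>h\<in>comp_of N ` npre N x. recurrent_comp h" "s \<le> i"
    and r: "i \<le> r" "\<forall>d\<in>past_all. npre N d \<inter> cut_of N (past i) \<noteq> {} \<longrightarrow> d \<in> past r"
    and m: "r < m" "\<forall>h. h < n \<and> recurrent_comp h \<longrightarrow>
              (\<exists>z\<in>past m. h \<in> comp_of N ` npre N z \<and> ev_le (f r) z)"
    and b: "b \<in> cut_of N (past m) - cut_of N (past i)"
    and b': "b' \<in> cut_of N (past i) - cut_of N (past m)"
  shows "cond_lt N b' b"
proof -
  have past_im: "past i \<subseteq> past m" using r(1) m(1) past_mono by simp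
  have "b' \<in> init_mark N \<union> postset N (past m)"
    using b' past_im unfolding cut_of_def postset_def by blast
  then obtain d where d: "d \<in> past m" "b' \<in> npre N d" using b' unfolding cut_of_def preset_def by blast
  then have "d \<in> past r" using r(2) b' unfolding past_all_def by blast
  then have d_le: "ev_le d (f r)" by (auto simp: local_conf_iff)
  have b_not_pre: "b \<notin> preset N (past m)" using b unfolding cut_of_def by blast
  then have "b \<notin> preset N (past i)" using past_im unfolding preset_def by blast
  then obtain p where p: "p \<in> past m" "p \<notin> past i" "b \<in> npost N p"
    using b unfolding cut_of_def postset_def by blast
  have pe: "p \<in> events N" using p(1) by (simp add: local_conf_iff)
  define h where "h = comp_of N b"
  have hp: "h \<in> comp_of N ` npre N p" using p(3) comp_npre_npost[OF pe] unfolding h_def by blast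
  have "p \<notin> past s" using p(2) past_mono[OF s(2)] by blast
  then have "recurrent_comp h" using s(1) hp p(1) unfolding past_all_def by blast
  moreover have "h < n" using comp_less npost_conds[OF pe] p(3) unfolding h_def by blast
  ultimately obtain z where z: "z \<in> past m" "h \<in> comp_of N ` npre N z" "ev_le (f r) z"
    using m(2) by blast
  have "z = p \<or> (z, p) \<in> (ev_step N)\<^sup>+ \<or> (p, z) \<in> (ev_step N)\<^sup>+"
    using comparable_if_same_comp[OF chain_events finite_past z(1) p(1) z(2) hp] .
  moreover have "(p, z) \<notin> (ev_step N)\<^sup>+"
    using consumed_in_local_conf[OF chain_events finite_past z(1) _ p(3)] z(2) b_not_pre
    unfolding h_def by blast
  ultimately have "ev_le z p" by (auto intro: trancl_into_rtrancl)
  then have "ev_le d p" using d_le z(3) by (meson rtrancl_trans)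
  moreover have "d \<in> events N" using d(1) by (simp add: local_conf_iff)
  ultimately show "cond_lt N b' b" using cond_ltI[OF d(2) _ _ pe p(3)] by blast
qed

lemma strong_cause_later:
  assumes s: "\<forall>x\<in>past_all - past s. \<forall>h\<in>comp_of N ` npre N x. recurrent_comp h" "s \<le> i"
  shows "\<exists>m>i. strong_cause N (f i) (f m)"
proof -
  define D where "D = (\<Union>b\<in>cut_of N (past i). {d\<in>past_all. b \<in> npre N d})"
  have "finite {d\<in>past_all. b \<in> npre N d}" for b
  proof (cases "{d\<in>past_all. b \<in> npre N d} = {}")
    case False
    then obtain d where "d \<in> past_all" "b \<in> npre N d" by blast
    then have "{d\<in>past_all. b \<in> npre N d} \<subseteq> {d}"
      using past_all_conflict_free unfolding conflict_free_def by blast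
    then show ?thesis by (rule finite_subset) simp
  qed (metis finite.emptyI)
  then have "finite D" unfolding D_def using finite_cut_past by blast
  moreover have "D \<subseteq> past_all" unfolding D_def by blast
  ultimately obtain r where r: "r \<ge> i" "D \<subseteq> past r" using finite_subset_past by blast
  have "\<forall>h\<in>{h. h < n \<and> recurrent_comp h}. \<exists>z\<in>past_all. h \<in> comp_of N ` npre N z \<and> ev_le (f r) z"
    unfolding recurrent_comp_def by blast
  then obtain m where m: "m \<ge> Suc r"
    "\<forall>h\<in>{h. h < n \<and> recurrent_comp h}. \<exists>z\<in>past m. h \<in> comp_of N ` npre N z \<and> ev_le (f r) z"
    using pick_past[of "{h. h < n \<and> recurrent_comp h}"
        "\<lambda>h z. h \<in> comp_of N ` npre N z \<and> ev_le (f r) z" "Suc r"] by auto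
  have "\<forall>b\<in>Mark N (f m) - Mark N (f i). \<forall>b'\<in>Mark N (f i) - Mark N (f m). cond_lt N b' b"
    unfolding Mark_past
    using cond_lt_cut_change[OF s r(1) _ _ m(2)[simplified]] r(2) m(1) unfolding D_def by fastforce
  moreover have "i < m" using r m by simp
  ultimately show ?thesis using chain_trancl unfolding strong_cause_def ev_lt_iff_trancl by blast
qed

lemma strong_cause_subchain:
  "\<exists>g :: nat \<Rightarrow> nat. strict_mono g \<and> (\<forall>k. strong_cause N (f (g k)) (f (g (Suc k))))"
proof -
  obtain s where s: "\<forall>x\<in>past_all - past s. \<forall>h\<in>comp_of N ` npre N x. recurrent_comp h"
    using eventually_recurrent by blast
  define next_idx where "next_idx i = (SOME m. m > i \<and> strong_cause N (f i) (f m))" for i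
  have next_idx: "next_idx i > i \<and> strong_cause N (f i) (f (next_idx i))" if "s \<le> i" for i
    unfolding next_idx_def using strong_cause_later[OF s that] by (rule someI_ex)
  define g where "g = rec_nat s (\<lambda>_. next_idx)"
  have g_Suc: "g (Suc k) = next_idx (g k)" for k unfolding g_def by simp
  have "s \<le> g k" for k
  proof (induction k)
    case 0
    then show ?case by (simp add: g_def)
  next
    case (Suc k)
    then show ?case using next_idx[OF Suc] g_Suc[of k] by simp
  qed
  then have "g k < g (Suc k) \<and> strong_cause N (f (g k)) (f (g (Suc k)))" for k
    using next_idx g_Suc by simp
  then show ?thesis by (intro exI[of _ g]) (simp add: strict_mono_Suc_iff)
qed

end

text \<open>Local configurations may be infinite, since the members of a union in \<open>is_bp\<close> need not
  be prefixes of one another. The description of \<open>Mark\<close> is then unsatisfiable, so all such events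
  get the same junk marking and strong causality degenerates to causality.\<close>

lemma Mark_infinite: "infinite (local_conf N e) \<Longrightarrow> Mark N e = (THE K. False)"
  unfolding Mark_def by (metis List.finite_set)

lemma strong_cause_if_infinite:
  "infinite (local_conf N e) \<Longrightarrow> infinite (local_conf N e') \<Longrightarrow> ev_lt N e e' \<Longrightarrow> strong_cause N e e'"
  unfolding strong_cause_def by (simp add: Mark_infinite)

theorem lemma1:
  fixes A :: "nat \<Rightarrow> ('a, 's) lts" and n :: nat
    and N :: "('b, 'e, 's) net" and f :: "nat \<Rightarrow> 'e"
  assumes "\<forall>j<n. is_lts (A j)"
    and "is_bp A n N"
    and "\<forall>i. f i \<in> events N"
    and "\<forall>i. ev_lt N (f i) (f (Suc i))"
  shows "\<exists>g :: nat \<Rightarrow> nat. strict_mono g \<and>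
           (\<forall>k. strong_cause N (f (g k)) (f (g (Suc k))))"
proof -
  interpret wf_bp n N using assms(2) by (rule is_bp_wf_bp)
  have steps: "(f i, f (Suc i)) \<in> (ev_step N)\<^sup>+" for i
    using assms(4) by (simp add: ev_lt_iff_trancl)
  show ?thesis
  proof (cases "\<forall>i. finite (local_conf N (f i))")
    case True
    interpret causal_chain n N f by unfold_locales (use assms(3) steps True in auto)
    show ?thesis by (rule strong_cause_subchain)
  next
    case False
    then obtain i0 where i0: "infinite (local_conf N (f i0))" by blast
    have "local_conf N (f i0) \<subseteq> local_conf N (f (i0 + k))" for k
      using trancl_chain[of f, OF steps, of i0 "i0 + k"] local_conf_mono_trancl[of "f i0" "f (i0 + k)" N]
      by (cases k) auto
    then have inf: "infinite (local_conf N (f (i0 + k)))" for k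
      using i0 finite_subset by blast
    have "strong_cause N (f (i0 + k)) (f (i0 + Suc k))" for k
      using strong_cause_if_infinite[OF inf inf] assms(4) by (metis add_Suc_right)
    moreover have "strict_mono (\<lambda>k. i0 + k)" by (rule strict_monoI) simp
    ultimately show ?thesis by blast
  qed
qed

end
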